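(* Every cograph has an hc-coloring.
   Context: All graphs are finite, simple and undirected. A (proper vertex) coloring of $G=(V,E)$ is a surjective map $\sigma:V\to S$ with $\sigma(x)\neq\sigma(y)$ whenever $xy\in E$. A cograph is a graph that is $K_1$, or a disjoint union of cographs, or a join of cographs. A cotree $(T,t)$ of a cograph $G$ is a rooted tree $T$ with leaf set $V$ and a labeling $t:V^0(T)\to\{0,1\}$ of its inner vertices such that for every inner vertex $u$, $G(u):=G[L(T(u))]$ (with $L(T(u))$ the leaves descending from $u$) is the disjoint union (if $t(u)=0$) or the join (if $t(u)=1$) of the graphs $G(v)$, $v$ a child of $u$. It is binary if every inner vertex has exactly two children. A coloring $\sigma$ is an hc-coloring with respect to a binary cotree $(T,t)$ if for every inner vertex $u$ with children $v_1,v_2$: if $t(u)=1$ then $\sigma(L(T(v_1)))\cap\sigma(L(T(v_2)))=\emptyset$, and if $t(u)=0$ then one of $\sigma(L(T(v_1)))$, $\sigma(L(T(v_2)))$ contains the other. A coloring of a cograph $G$ is an hc-coloring of $G$ if it is an hc-coloring with respect to some binary cotree of $G$. *)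

theory Defs
  imports Main
begin

text \<open>Graphs are given by a vertex set V and an edge set E of 2-element sets.\<close>

inductive cograph :: "'a set \<Rightarrow> 'a set set \<Rightarrow> bool" where
  single: "cograph {v} {}"
| union: "cograph V1 E1 \<Longrightarrow> cograph V2 E2 \<Longrightarrow> V1 \<inter> V2 = {} \<Longrightarrow>
            cograph (V1 \<union> V2) (E1 \<union> E2)"
| join: "cograph V1 E1 \<Longrightarrow> cograph V2 E2 \<Longrightarrow> V1 \<inter> V2 = {} \<Longrightarrow>
            cograph (V1 \<union> V2) (E1 \<union> E2 \<union> {{x, y} | x y. x \<in> V1 \<and> y \<in> V2})"

text \<open>Binary rooted trees with leaves labelled by vertices and inner vertices
  labelled by bool (True = 1 = join, False = 0 = disjoint union).\<close>

datatype 'a bcotree = Lf 'a | Nd bool "'a bcotree" "'a bcotree"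

fun leaf_list :: "'a bcotree \<Rightarrow> 'a list" where
  "leaf_list (Lf x) = [x]"
| "leaf_list (Nd t l r) = leaf_list l @ leaf_list r"

definition leaves :: "'a bcotree \<Rightarrow> 'a set" where
  "leaves T = set (leaf_list T)"

fun cotree_ok :: "'a set set \<Rightarrow> 'a bcotree \<Rightarrow> bool" where
  "cotree_ok E (Lf x) = True"
| "cotree_ok E (Nd t l r) \<longleftrightarrow> cotree_ok E l \<and> cotree_ok E r \<and>
     (\<forall>x\<in>leaves l. \<forall>y\<in>leaves r. ({x, y} \<in> E \<longleftrightarrow> t))"

definition binary_cotree_of :: "'a set \<Rightarrow> 'a set set \<Rightarrow> 'a bcotree \<Rightarrow> bool" where
  "binary_cotree_of V E T \<longleftrightarrow> distinct (leaf_list T) \<and> leaves T = V \<and> cotree_ok E T"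

definition coloring :: "'a set \<Rightarrow> 'a set set \<Rightarrow> ('a \<Rightarrow> 'c) \<Rightarrow> 'c set \<Rightarrow> bool" where
  "coloring V E \<sigma> S \<longleftrightarrow> \<sigma> ` V = S \<and> (\<forall>x\<in>V. \<forall>y\<in>V. {x, y} \<in> E \<longrightarrow> \<sigma> x \<noteq> \<sigma> y)"

fun hc_wrt :: "('a \<Rightarrow> 'c) \<Rightarrow> 'a bcotree \<Rightarrow> bool" where
  "hc_wrt \<sigma> (Lf x) = True"
| "hc_wrt \<sigma> (Nd t l r) \<longleftrightarrow> hc_wrt \<sigma> l \<and> hc_wrt \<sigma> r \<and>
     (if t then \<sigma> ` leaves l \<inter> \<sigma> ` leaves r = {}
      else (\<sigma> ` leaves l \<subseteq> \<sigma> ` leaves r \<or> \<sigma> ` leaves r \<subseteq> \<sigma> ` leaves l))"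

definition hc_coloring :: "'a set \<Rightarrow> 'a set set \<Rightarrow> ('a \<Rightarrow> 'c) \<Rightarrow> 'c set \<Rightarrow> bool" where
  "hc_coloring V E \<sigma> S \<longleftrightarrow> coloring V E \<sigma> S \<and> (\<exists>T. binary_cotree_of V E T \<and> hc_wrt \<sigma> T)"

end

theory Submission
  imports Defs
begin

text \<open>Color the cograph along its construction, using the colors \<open>{..<k}\<close>. For a
  disjoint union both parts are colored from 0, so their color sets are initial segments
  and hence nested; for a join the colors of the second part are shifted past those of
  the first, so the color sets are disjoint. Such a coloring is automatically proper:
  the lowest common ancestor of the two ends of an edge is a join node.\<close>

lemma leaves_Lf [simp]: "leaves (Lf x) = {x}"
  by (simp add: leaves_def)

lemma leaves_Nd [simp]: "leaves (Nd t l r) = leaves l \<union> leaves r"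
  by (simp add: leaves_def)

lemma cograph_edges_subset: "cograph V E \<Longrightarrow> E \<subseteq> Pow V"
  by (induction rule: cograph.induct) auto

lemma cograph_no_loops: "cograph V E \<Longrightarrow> {x} \<notin> E"
  by (induction rule: cograph.induct) (auto simp: doubleton_eq_iff)

lemma cotree_ok_cong:
  assumes "\<forall>x\<in>leaves T. \<forall>y\<in>leaves T. {x, y} \<in> E \<longleftrightarrow> {x, y} \<in> E'"
  shows "cotree_ok E T \<longleftrightarrow> cotree_ok E' T"
  using assms by (induction T) auto

lemma binary_cotree_of_Nd:
  assumes "binary_cotree_of V1 E1 T1" "binary_cotree_of V2 E2 T2" "V1 \<inter> V2 = {}"
    and "\<forall>x\<in>V1. \<forall>y\<in>V1. {x, y} \<in> E \<longleftrightarrow> {x, y} \<in> E1"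
    and "\<forall>x\<in>V2. \<forall>y\<in>V2. {x, y} \<in> E \<longleftrightarrow> {x, y} \<in> E2"
    and "\<forall>x\<in>V1. \<forall>y\<in>V2. {x, y} \<in> E \<longleftrightarrow> t"
  shows "binary_cotree_of (V1 \<union> V2) E (Nd t T1 T2)"
proof -
  have "cotree_ok E T1"
    using assms(1,4) cotree_ok_cong[of T1 E E1] by (simp add: binary_cotree_of_def)
  moreover have "cotree_ok E T2"
    using assms(2,5) cotree_ok_cong[of T2 E E2] by (simp add: binary_cotree_of_def)
  ultimately show ?thesis
    using assms(1-3,6) by (auto simp: binary_cotree_of_def leaves_def)
qed

lemma hc_wrt_relabel:
  assumes "inj f" "\<forall>x\<in>leaves T. \<sigma> x = f (\<tau> x)"
  shows "hc_wrt \<sigma> T \<longleftrightarrow> hc_wrt \<tau> T"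
  using assms(2)
proof (induction T)
  case (Lf x)
  then show ?case by simp
next
  case (Nd t l r)
  then have "\<sigma> ` leaves l = f ` \<tau> ` leaves l" "\<sigma> ` leaves r = f ` \<tau> ` leaves r"
    by (auto simp: image_image intro!: image_cong)
  with Nd show ?case
    using assms(1) by (simp add: image_Int[symmetric] inj_image_subset_iff)
qed

lemma hc_wrt_separates_edges:
  assumes "cotree_ok E T" "hc_wrt \<sigma> T" "x \<in> leaves T" "y \<in> leaves T" "{x, y} \<in> E" "x \<noteq> y"
  shows "\<sigma> x \<noteq> \<sigma> y"
  using assms
proof (induction T)
  case (Lf z)
  then show ?case by simp
next
  case (Nd t l r)
  have cross: "\<sigma> x \<noteq> \<sigma> y" if "x \<in> leaves l" "y \<in> leaves r" "{x, y} \<in> E" for x y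
    using Nd.prems(1,2) that by auto
  show ?case
    using Nd cross[of x y] cross[of y x] by (auto simp: insert_commute)
qed

lemma hc_wrt_coloring:
  assumes "binary_cotree_of V E T" "hc_wrt \<sigma> T" "\<And>x. {x} \<notin> E"
  shows "coloring V E \<sigma> (\<sigma> ` V)"
  using assms hc_wrt_separates_edges[of E T \<sigma>]
  unfolding coloring_def binary_cotree_of_def by fastforce

lemma hc_cotree_union:
  fixes \<sigma>1 \<sigma>2 :: "'a \<Rightarrow> nat"
  assumes "V1 \<inter> V2 = {}" "E1 \<subseteq> Pow V1" "E2 \<subseteq> Pow V2"
    and T1: "binary_cotree_of V1 E1 T1" "hc_wrt \<sigma>1 T1" "\<sigma>1 ` V1 = {..<k1}"
    and T2: "binary_cotree_of V2 E2 T2" "hc_wrt \<sigma>2 T2" "\<sigma>2 ` V2 = {..<k2}"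
  shows "\<exists>T (\<sigma> :: 'a \<Rightarrow> nat) k.
    binary_cotree_of (V1 \<union> V2) (E1 \<union> E2) T \<and> hc_wrt \<sigma> T \<and> \<sigma> ` (V1 \<union> V2) = {..<k}"
proof (intro exI conjI)
  define \<sigma> where "\<sigma> x = (if x \<in> V1 then \<sigma>1 x else \<sigma>2 x)" for x
  have leaves: "leaves T1 = V1" "leaves T2 = V2"
    using T1(1) T2(1) by (simp_all add: binary_cotree_of_def)
  have ends: "{x, y} \<in> E1 \<Longrightarrow> x \<in> V1 \<and> y \<in> V1" "{x, y} \<in> E2 \<Longrightarrow> x \<in> V2 \<and> y \<in> V2" for x y
    using assms(2,3) by auto
  show "binary_cotree_of (V1 \<union> V2) (E1 \<union> E2) (Nd False T1 T2)"
    using T1(1) T2(1) assms(1) ends by (intro binary_cotree_of_Nd) blast+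
  have on_T2: "\<forall>x\<in>leaves T2. \<sigma> x = \<sigma>2 x"
    using leaves assms(1) by (auto simp: \<sigma>_def)
  then have "hc_wrt \<sigma> T1" "hc_wrt \<sigma> T2"
    using T1(2) T2(2) leaves hc_wrt_relabel[of id T1 \<sigma> \<sigma>1] hc_wrt_relabel[of id T2 \<sigma> \<sigma>2]
    by (simp_all add: \<sigma>_def)
  moreover have colors: "\<sigma> ` V1 = {..<k1}" "\<sigma> ` V2 = {..<k2}"
    using T1(3) T2(3) on_T2 leaves by (simp_all add: \<sigma>_def)
  ultimately show "hc_wrt \<sigma> (Nd False T1 T2)"
    using leaves by (cases "k1 \<le> k2") auto
  show "\<sigma> ` (V1 \<union> V2) = {..<max k1 k2}"
    using colors by (auto simp: image_Un)
qed

lemma hc_cotree_join: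
  fixes \<sigma>1 \<sigma>2 :: "'a \<Rightarrow> nat"
  assumes "V1 \<inter> V2 = {}" "E1 \<subseteq> Pow V1" "E2 \<subseteq> Pow V2"
    and T1: "binary_cotree_of V1 E1 T1" "hc_wrt \<sigma>1 T1" "\<sigma>1 ` V1 = {..<k1}"
    and T2: "binary_cotree_of V2 E2 T2" "hc_wrt \<sigma>2 T2" "\<sigma>2 ` V2 = {..<k2}"
  shows "\<exists>T (\<sigma> :: 'a \<Rightarrow> nat) k.
    binary_cotree_of (V1 \<union> V2) (E1 \<union> E2 \<union> {{x, y} | x y. x \<in> V1 \<and> y \<in> V2}) T \<and>
    hc_wrt \<sigma> T \<and> \<sigma> ` (V1 \<union> V2) = {..<k}"
proof (intro exI conjI)
  define \<sigma> where "\<sigma> x = (if x \<in> V1 then \<sigma>1 x else k1 + \<sigma>2 x)" for x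
  have leaves: "leaves T1 = V1" "leaves T2 = V2"
    using T1(1) T2(1) by (simp_all add: binary_cotree_of_def)
  have ends: "{x, y} \<in> E1 \<Longrightarrow> x \<in> V1 \<and> y \<in> V1" "{x, y} \<in> E2 \<Longrightarrow> x \<in> V2 \<and> y \<in> V2" for x y
    using assms(2,3) by auto
  have cross: "{x, y} \<in> {{a, b} | a b. a \<in> V1 \<and> b \<in> V2} \<longleftrightarrow>
      x \<in> V1 \<and> y \<in> V2 \<or> x \<in> V2 \<and> y \<in> V1" for x y
    by (auto simp: doubleton_eq_iff)
  show "binary_cotree_of (V1 \<union> V2) (E1 \<union> E2 \<union> {{x, y} | x y. x \<in> V1 \<and> y \<in> V2})
      (Nd True T1 T2)"
    using T1(1) T2(1) assms(1) ends cross by (intro binary_cotree_of_Nd) blast+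
  have on_T2: "\<forall>x\<in>leaves T2. \<sigma> x = k1 + \<sigma>2 x"
    using leaves assms(1) by (auto simp: \<sigma>_def)
  then have "hc_wrt \<sigma> T1" "hc_wrt \<sigma> T2"
    using T1(2) T2(2) leaves hc_wrt_relabel[of id T1 \<sigma> \<sigma>1] hc_wrt_relabel[of "(+) k1" T2 \<sigma> \<sigma>2]
    by (simp_all add: \<sigma>_def)
  moreover have "\<sigma> ` V2 = (+) k1 ` \<sigma>2 ` V2"
    using on_T2 leaves by (simp add: image_image)
  then have colors: "\<sigma> ` V1 = {..<k1}" "\<sigma> ` V2 = {k1..<k1 + k2}"
    using T1(3) T2(3) by (simp_all add: \<sigma>_def atLeast0LessThan[symmetric] add.commute)
  ultimately show "hc_wrt \<sigma> (Nd True T1 T2)"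
    using leaves by auto
  show "\<sigma> ` (V1 \<union> V2) = {..<k1 + k2}"
    using colors by (auto simp: image_Un)
qed

lemma cograph_hc_cotree:
  assumes "cograph V E"
  shows "\<exists>T (\<sigma> :: 'a \<Rightarrow> nat) k. binary_cotree_of V E T \<and> hc_wrt \<sigma> T \<and> \<sigma> ` V = {..<k}"
  using assms
proof (induction rule: cograph.induct)
  case (single v)
  have "binary_cotree_of {v} {} (Lf v) \<and> hc_wrt (\<lambda>_. 0) (Lf v) \<and> (\<lambda>_. 0 :: nat) ` {v} = {..<1}"
    by (auto simp: binary_cotree_of_def leaves_def)
  then show ?case by blast
next
  case (union V1 E1 V2 E2)
  obtain T1 and \<sigma>1 :: "'a \<Rightarrow> nat" and k1
    where T1: "binary_cotree_of V1 E1 T1" "hc_wrt \<sigma>1 T1" "\<sigma>1 ` V1 = {..<k1}"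
    using union.IH(1) by blast
  obtain T2 and \<sigma>2 :: "'a \<Rightarrow> nat" and k2
    where T2: "binary_cotree_of V2 E2 T2" "hc_wrt \<sigma>2 T2" "\<sigma>2 ` V2 = {..<k2}"
    using union.IH(2) by blast
  show ?case
    using hc_cotree_union[OF union.hyps(3) union.hyps(1,2)[THEN cograph_edges_subset] T1 T2] .
next
  case (join V1 E1 V2 E2)
  obtain T1 and \<sigma>1 :: "'a \<Rightarrow> nat" and k1
    where T1: "binary_cotree_of V1 E1 T1" "hc_wrt \<sigma>1 T1" "\<sigma>1 ` V1 = {..<k1}"
    using join.IH(1) by blast
  obtain T2 and \<sigma>2 :: "'a \<Rightarrow> nat" and k2
    where T2: "binary_cotree_of V2 E2 T2" "hc_wrt \<sigma>2 T2" "\<sigma>2 ` V2 = {..<k2}"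
    using join.IH(2) by blast
  show ?case
    using hc_cotree_join[OF join.hyps(3) join.hyps(1,2)[THEN cograph_edges_subset] T1 T2] .
qed

theorem corollary6:
  fixes V :: "'a set" and E :: "'a set set"
  assumes "cograph V E"
  shows "\<exists>(\<sigma> :: 'a \<Rightarrow> nat) S. hc_coloring V E \<sigma> S"
proof -
  obtain T and \<sigma> :: "'a \<Rightarrow> nat" where "binary_cotree_of V E T" "hc_wrt \<sigma> T"
    using cograph_hc_cotree[OF assms] by blast
  moreover have "coloring V E \<sigma> (\<sigma> ` V)"
    using calculation cograph_no_loops[OF assms] by (rule hc_wrt_coloring)
  ultimately show ?thesis
    unfolding hc_coloring_def by blast
qed

end
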